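(* Let $((i_0,j_0),\dots,(i_{q-1},j_{q-1}))$ be a sequence of pairs in $[n]^2$ with $i_\ell<j_\ell$ defining a sorting network, and let $Q_n\subset\mathbb{R}^{n(q+1)}$ and $\tilde Q_n\subset\mathbb{R}^{n+2q}$ be as defined below. Then $Q_n$ and $\tilde Q_n$ are affinely equivalent: there exist affine maps $\tilde\pi:\mathbb{R}^{n(q+1)}\to\mathbb{R}^{n+2q}$ and $\overline{\pi}:\mathbb{R}^{n+2q}\to\mathbb{R}^{n(q+1)}$ such that $\overline{\pi}(\tilde Q_n)=Q_n$ and $\tilde\pi(Q_n)=\tilde Q_n$.
   Context: The sequence defines a sorting network if applying successively, for $\ell=0,\dots,q-1$, the map exchanging coordinates $x_{i_\ell},x_{j_\ell}$ whenever $x_{i_\ell}>x_{j_\ell}$, sends every $(\sigma(1),\dots,\sigma(n))$, $\sigma\in\mathcal{S}_n$, to $x_{id}=(1,2,\dots,n)$. Define $Q_n$ as the set of $(y_0,\dots,y_q)\in(\mathbb{R}^n)^{q+1}$ with $y_q=x_{id}$ and, for each $k=0,\dots,q-1$: $(y_{k+1})_l=(y_k)_l$ for all $l\notin\{i_k,j_k\}$; $(y_{k+1})_{i_k}+(y_{k+1})_{j_k}=(y_k)_{i_k}+(y_k)_{j_k}$; and $(y_{k+1})_{j_k}-(y_{k+1})_{i_k}\ge |(y_k)_{j_k}-(y_k)_{i_k}|$. For $\tilde w=(y_0,a_1,b_1,\dots,a_q,b_q)\in\mathbb{R}^n\times\mathbb{R}^{2q}$ define linear maps $z_0(\tilde w)=y_0$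 and, for $1\le m\le q$, $z_m(\tilde w)\in\mathbb{R}^n$ obtained from $z_{m-1}(\tilde w)$ by replacing its $i_{m-1}$-th coordinate by $a_m$ and its $j_{m-1}$-th coordinate by $b_m$; let $\alpha_m(\tilde w)$ and $\beta_m(\tilde w)$ be the $i_{m-1}$-th and $j_{m-1}$-th coordinates of $z_{m-1}(\tilde w)$. Then $\tilde Q_n=\{\tilde w\in\mathbb{R}^{n+2q}: z_q(\tilde w)=x_{id},\ a_m+b_m=\alpha_m(\tilde w)+\beta_m(\tilde w),\ b_m\ge\max\{\alpha_m(\tilde w),\beta_m(\tilde w)\}\ \forall 1\le m\le q\}$. *)

theory Defs
  imports Complex_Main "HOL-Combinatorics.Permutations"
begin

text \<open>Conventions: indices are 0-based, so [n] is rendered as {0..<n} and the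
comparator sequence is given by functions i j :: nat => nat on {0..<q}.
A point of R^N is represented as a function nat => real vanishing at
all coordinates >= N.\<close>

definition vecs :: "nat \<Rightarrow> (nat \<Rightarrow> real) set" where
  "vecs N = {x. \<forall>k\<ge>N. x k = 0}"

definition affine_map :: "nat \<Rightarrow> nat \<Rightarrow> ((nat \<Rightarrow> real) \<Rightarrow> (nat \<Rightarrow> real)) \<Rightarrow> bool" where
  "affine_map N M f \<longleftrightarrow>
     (\<exists>(A :: nat \<Rightarrow> nat \<Rightarrow> real) (c :: nat \<Rightarrow> real). \<forall>x\<in>vecs N.
        f x = (\<lambda>k. if k < M then c k + (\<Sum>l<N. A k l * x l) else 0))"

definition xid :: "nat \<Rightarrow> real" where
  "xid l = real (l + 1)"

definition cmpx :: "nat \<Rightarrow> nat \<Rightarrow> (nat \<Rightarrow> real) \<Rightarrow> (nat \<Rightarrow> real)" where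
  "cmpx a b x = (if x a > x b then x(a := x b, b := x a) else x)"

fun apply_net :: "(nat \<Rightarrow> nat) \<Rightarrow> (nat \<Rightarrow> nat) \<Rightarrow> nat \<Rightarrow> (nat \<Rightarrow> real) \<Rightarrow> (nat \<Rightarrow> real)" where
  "apply_net i j 0 x = x"
| "apply_net i j (Suc m) x = cmpx (i m) (j m) (apply_net i j m x)"

definition sorting_network :: "nat \<Rightarrow> nat \<Rightarrow> (nat \<Rightarrow> nat) \<Rightarrow> (nat \<Rightarrow> nat) \<Rightarrow> bool" where
  "sorting_network n q i j \<longleftrightarrow>
     (\<forall>\<sigma>. \<sigma> permutes {0..<n} \<longrightarrow>
        (\<forall>l<n. apply_net i j q (\<lambda>t. real (\<sigma> t + 1)) l = xid l))"

text \<open>Q_n, flattened: y_k has l-th coordinate at index k*n + l, k = 0..q.\<close>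
definition Qn :: "nat \<Rightarrow> nat \<Rightarrow> (nat \<Rightarrow> nat) \<Rightarrow> (nat \<Rightarrow> nat) \<Rightarrow> (nat \<Rightarrow> real) set" where
  "Qn n q i j = {x \<in> vecs (n * (q + 1)).
     let y = (\<lambda>k l. x (k * n + l)) in
       (\<forall>l<n. y q l = xid l) \<and>
       (\<forall>k<q.
          (\<forall>l<n. l \<noteq> i k \<and> l \<noteq> j k \<longrightarrow> y (Suc k) l = y k l) \<and>
          y (Suc k) (i k) + y (Suc k) (j k) = y k (i k) + y k (j k) \<and>
          y (Suc k) (j k) - y (Suc k) (i k) \<ge> \<bar>y k (j k) - y k (i k)\<bar>)}"

text \<open>Coordinates of w = (y_0, a_1, b_1, ..., a_q, b_q) in R^(n+2q):
  (y_0)_l = w l for l < n, a_m = w (n + 2(m-1)), b_m = w (n + 2(m-1) + 1).\<close>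
definition tl_a :: "nat \<Rightarrow> (nat \<Rightarrow> real) \<Rightarrow> nat \<Rightarrow> real" where
  "tl_a n w m = w (n + 2 * (m - 1))"

definition tl_b :: "nat \<Rightarrow> (nat \<Rightarrow> real) \<Rightarrow> nat \<Rightarrow> real" where
  "tl_b n w m = w (n + 2 * (m - 1) + 1)"

fun tl_z :: "nat \<Rightarrow> (nat \<Rightarrow> nat) \<Rightarrow> (nat \<Rightarrow> nat) \<Rightarrow> (nat \<Rightarrow> real) \<Rightarrow> nat \<Rightarrow> (nat \<Rightarrow> real)" where
  "tl_z n i j w 0 = (\<lambda>l. if l < n then w l else 0)"
| "tl_z n i j w (Suc m) = (tl_z n i j w m)(i m := tl_a n w (Suc m), j m := tl_b n w (Suc m))"

definition tl_alpha :: "nat \<Rightarrow> (nat \<Rightarrow> nat) \<Rightarrow> (nat \<Rightarrow> nat) \<Rightarrow> (nat \<Rightarrow> real) \<Rightarrow> nat \<Rightarrow> real" where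
  "tl_alpha n i j w m = tl_z n i j w (m - 1) (i (m - 1))"

definition tl_beta :: "nat \<Rightarrow> (nat \<Rightarrow> nat) \<Rightarrow> (nat \<Rightarrow> nat) \<Rightarrow> (nat \<Rightarrow> real) \<Rightarrow> nat \<Rightarrow> real" where
  "tl_beta n i j w m = tl_z n i j w (m - 1) (j (m - 1))"

definition Qtn :: "nat \<Rightarrow> nat \<Rightarrow> (nat \<Rightarrow> nat) \<Rightarrow> (nat \<Rightarrow> nat) \<Rightarrow> (nat \<Rightarrow> real) set" where
  "Qtn n q i j = {w \<in> vecs (n + 2 * q).
     (\<forall>l<n. tl_z n i j w q l = xid l) \<and>
     (\<forall>m\<in>{1..q}.
        tl_a n w m + tl_b n w m = tl_alpha n i j w m + tl_beta n i j w m \<and>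
        tl_b n w m \<ge> max (tl_alpha n i j w m) (tl_beta n i j w m))}"

end

theory Submission
  imports Defs
begin

text \<open>The map \<open>pi_tilde\<close> keeps y_0 and, of each y_(k+1), only the two coordinates i_k, j_k
moved by the k-th comparator; on \<open>Qn\<close> nothing is lost, since the other coordinates of y_(k+1)
are copied from y_k. The map \<open>pi_bar\<close> rebuilds y_k as z_k. Both maps only copy coordinates,
hence are linear, and they are mutually inverse on the relevant sets. Given the common constraint
a + b = \<alpha> + \<beta>, the inequality b - a \<ge> |\<beta> - \<alpha>| of \<open>Qn\<close> is equivalent to the inequality
b \<ge> max \<alpha> \<beta> of \<open>Qtn\<close>, so the two systems of constraints correspond.\<close>

definition select_coords :: "nat \<Rightarrow> (nat \<Rightarrow> nat) \<Rightarrow> (nat \<Rightarrow> real) \<Rightarrow> (nat \<Rightarrow> real)" where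
  "select_coords M s x = (\<lambda>k. if k < M then x (s k) else 0)"

lemma select_coords_in_vecs: "select_coords M s x \<in> vecs M"
  by (simp add: select_coords_def vecs_def)

lemma affine_map_select_coords:
  assumes "\<And>k. k < M \<Longrightarrow> s k < N"
  shows "affine_map N M (select_coords M s)"
  unfolding affine_map_def
proof (intro exI ballI ext)
  fix x :: "nat \<Rightarrow> real" and k
  have "k < M \<Longrightarrow> (\<Sum>l<N. of_bool (l = s k) * x l) = x (s k)"
    using assms by (simp add: Int_def conj_commute cong: conj_cong)
  then show "select_coords M s x k =
      (if k < M then 0 + (\<Sum>l<N. of_bool (l = s k) * x l) else 0)"
    by (simp add: select_coords_def)
qed

lemma comparator_constraint_iff:
  fixes a b a' b' :: "'a :: linordered_idom"
  shows "(a' + b' = a + b \<and> \<bar>b - a\<bar> \<le> b' - a') \<longleftrightarrow> (a' + b' = a + b \<and> max a b \<le> b')"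
  by (auto simp: abs_if max_def algebra_simps)

text \<open>Coordinates n + 2m and n + 2m + 1 of the image are (y_(m+1))_(i_m) and (y_(m+1))_(j_m),
stored at positions (m+1) n + i_m and (m+1) n + j_m of the flattened argument.\<close>

definition pi_tilde_index :: "nat \<Rightarrow> (nat \<Rightarrow> nat) \<Rightarrow> (nat \<Rightarrow> nat) \<Rightarrow> nat \<Rightarrow> nat" where
  "pi_tilde_index n i j k =
     (if k < n then k
      else Suc ((k - n) div 2) * n + (if even (k - n) then i else j) ((k - n) div 2))"

definition pi_tilde :: "nat \<Rightarrow> nat \<Rightarrow> (nat \<Rightarrow> nat) \<Rightarrow> (nat \<Rightarrow> nat) \<Rightarrow> (nat \<Rightarrow> real) \<Rightarrow> (nat \<Rightarrow> real)" where
  "pi_tilde n q i j = select_coords (n + 2 * q) (pi_tilde_index n i j)"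

lemma pi_tilde_in_vecs: "pi_tilde n q i j x \<in> vecs (n + 2 * q)"
  by (simp add: pi_tilde_def select_coords_in_vecs)

definition pi_bar :: "nat \<Rightarrow> nat \<Rightarrow> (nat \<Rightarrow> nat) \<Rightarrow> (nat \<Rightarrow> nat) \<Rightarrow> (nat \<Rightarrow> real) \<Rightarrow> (nat \<Rightarrow> real)" where
  "pi_bar n q i j w = (\<lambda>k. if k < n * (q + 1) then tl_z n i j w (k div n) (k mod n) else 0)"

fun z_index :: "nat \<Rightarrow> (nat \<Rightarrow> nat) \<Rightarrow> (nat \<Rightarrow> nat) \<Rightarrow> nat \<Rightarrow> nat \<Rightarrow> nat" where
  "z_index n i j 0 l = l"
| "z_index n i j (Suc m) l =
     (if l = j m then n + 2 * m + 1 else if l = i m then n + 2 * m else z_index n i j m l)"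

lemma tl_z_eq_z_index: "l < n \<Longrightarrow> tl_z n i j w m l = w (z_index n i j m l)"
  by (induction m) (simp_all add: tl_a_def tl_b_def)

lemma z_index_less: "m \<le> q \<Longrightarrow> l < n \<Longrightarrow> z_index n i j m l < n + 2 * q"
  by (induction m) auto

lemma block_index_bounds:
  fixes k n q :: nat
  assumes "k < n * (q + 1)"
  shows "k div n \<le> q" "k mod n < n"
proof -
  have "n > 0" using assms by (cases n) auto
  then show "k mod n < n" by simp
  have "k div n < q + 1"
    using assms by (metis less_mult_imp_div_less mult.commute)
  then show "k div n \<le> q" by simp
qed

lemma pi_bar_eq_select_coords:
  "pi_bar n q i j = select_coords (n * (q + 1)) (\<lambda>k. z_index n i j (k div n) (k mod n))"
  by (auto simp: pi_bar_def select_coords_def tl_z_eq_z_index block_index_bounds fun_eq_iff)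

lemma affine_map_pi_tilde:
  assumes "\<forall>k<q. i k < n \<and> j k < n"
  shows "affine_map (n * (q + 1)) (n + 2 * q) (pi_tilde n q i j)"
  unfolding pi_tilde_def
proof (rule affine_map_select_coords)
  fix k assume "k < n + 2 * q"
  have "Suc m * n + l < n * (q + 1)" if "m < q" "l < n" for m l :: nat
  proof -
    have "Suc m * n + l < Suc (Suc m) * n" using that by simp
    also have "\<dots> \<le> (q + 1) * n" using that by (intro mult_right_mono) auto
    finally show ?thesis by (simp add: mult.commute)
  qed
  with \<open>k < n + 2 * q\<close> assms show "pi_tilde_index n i j k < n * (q + 1)"
    by (auto simp: pi_tilde_index_def less_diff_conv2 intro: trans_less_add1)
qed

lemma affine_map_pi_bar: "affine_map (n + 2 * q) (n * (q + 1)) (pi_bar n q i j)"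
  unfolding pi_bar_eq_select_coords
  by (rule affine_map_select_coords) (simp add: z_index_less block_index_bounds)

lemma pi_bar_block:
  assumes "k \<le> q" "l < n"
  shows "pi_bar n q i j w (k * n + l) = tl_z n i j w k l"
proof -
  have "k * n + l < (k + 1) * n" using assms by simp
  also have "\<dots> \<le> n * (q + 1)" using assms by (simp add: mult.commute)
  finally show ?thesis using assms by (simp add: pi_bar_def)
qed

lemma tl_a_pi_tilde: "k < q \<Longrightarrow> tl_a n (pi_tilde n q i j x) (Suc k) = x (Suc k * n + i k)"
  by (simp add: tl_a_def pi_tilde_def select_coords_def pi_tilde_index_def)

lemma tl_b_pi_tilde: "k < q \<Longrightarrow> tl_b n (pi_tilde n q i j x) (Suc k) = x (Suc k * n + j k)"
  by (simp add: tl_b_def pi_tilde_def select_coords_def pi_tilde_index_def)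

lemma tl_z_pi_tilde:
  assumes "\<forall>k<q. \<forall>l<n. l \<noteq> i k \<and> l \<noteq> j k \<longrightarrow> x (Suc k * n + l) = x (k * n + l)"
    and "k \<le> q" "l < n"
  shows "tl_z n i j (pi_tilde n q i j x) k l = x (k * n + l)"
  using assms(2,3)
proof (induction k arbitrary: l)
  case 0
  then show ?case by (simp add: pi_tilde_def select_coords_def pi_tilde_index_def)
next
  case (Suc k)
  then show ?case using assms(1) by (simp add: tl_a_pi_tilde tl_b_pi_tilde del: mult_Suc)
qed

lemma pi_bar_pi_tilde:
  assumes "x \<in> vecs (n * (q + 1))"
    and "\<forall>k<q. \<forall>l<n. l \<noteq> i k \<and> l \<noteq> j k \<longrightarrow> x (Suc k * n + l) = x (k * n + l)"
  shows "pi_bar n q i j (pi_tilde n q i j x) = x"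
proof
  fix t
  show "pi_bar n q i j (pi_tilde n q i j x) t = x t"
  proof (cases "t < n * (q + 1)")
    case True
    with block_index_bounds[OF True] show ?thesis
      using tl_z_pi_tilde[OF assms(2)] by (simp add: pi_bar_def)
  next
    case False
    with assms(1) show ?thesis by (simp add: pi_bar_def vecs_def)
  qed
qed

lemma pi_tilde_pi_bar:
  assumes "w \<in> vecs (n + 2 * q)" and "\<forall>k<q. i k \<noteq> j k \<and> i k < n \<and> j k < n"
  shows "pi_tilde n q i j (pi_bar n q i j w) = w"
proof
  fix t
  show "pi_tilde n q i j (pi_bar n q i j w) t = w t"
  proof (cases "n \<le> t \<and> t < n + 2 * q")
    case True
    define k where "k = (t - n) div 2"
    have "k < q" using True by (auto simp: k_def)
    moreover have "t = n + 2 * k \<or> t = n + 2 * k + 1" using True by (auto simp: k_def)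
    ultimately show ?thesis
      using assms(2) pi_bar_block[of "Suc k" q "i k" n] pi_bar_block[of "Suc k" q "j k" n]
      by (auto simp: pi_tilde_def select_coords_def pi_tilde_index_def tl_a_def tl_b_def
          simp del: mult_Suc)
  next
    case False
    with assms(1) pi_bar_block[of 0 q t n] show ?thesis
      by (auto simp: pi_tilde_def select_coords_def pi_tilde_index_def vecs_def)
  qed
qed

lemma pi_bar_in_Qn_iff:
  assumes w: "w \<in> vecs (n + 2 * q)" and ij: "\<forall>k<q. i k \<noteq> j k \<and> i k < n \<and> j k < n"
  shows "pi_bar n q i j w \<in> Qn n q i j \<longleftrightarrow> w \<in> Qtn n q i j"
proof -
  let ?y = "\<lambda>k l. pi_bar n q i j w (k * n + l)"
  let ?a = "tl_a n w" and ?b = "tl_b n w"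
  let ?\<alpha> = "tl_alpha n i j w" and ?\<beta> = "tl_beta n i j w"
  have last: "(\<forall>l<n. ?y q l = xid l) \<longleftrightarrow> (\<forall>l<n. tl_z n i j w q l = xid l)"
    by (simp add: pi_bar_block)
  have step: "((\<forall>l<n. l \<noteq> i k \<and> l \<noteq> j k \<longrightarrow> ?y (Suc k) l = ?y k l) \<and>
       ?y (Suc k) (i k) + ?y (Suc k) (j k) = ?y k (i k) + ?y k (j k) \<and>
       \<bar>?y k (j k) - ?y k (i k)\<bar> \<le> ?y (Suc k) (j k) - ?y (Suc k) (i k)) \<longleftrightarrow>
     (?a (Suc k) + ?b (Suc k) = ?\<alpha> (Suc k) + ?\<beta> (Suc k) \<and>
       max (?\<alpha> (Suc k)) (?\<beta> (Suc k)) \<le> ?b (Suc k))" if "k < q" for k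
  proof -
    have untouched: "\<forall>l<n. l \<noteq> i k \<and> l \<noteq> j k \<longrightarrow> ?y (Suc k) l = ?y k l"
      using that by (simp add: pi_bar_block del: mult_Suc)
    have "?y (Suc k) (i k) = ?a (Suc k)" "?y (Suc k) (j k) = ?b (Suc k)"
      "?y k (i k) = ?\<alpha> (Suc k)" "?y k (j k) = ?\<beta> (Suc k)"
      using that ij by (simp_all add: pi_bar_block tl_alpha_def tl_beta_def del: mult_Suc)
    note eqs = this
    show ?thesis
      unfolding eqs conj_assoc[symmetric] comparator_constraint_iff
      using untouched by blast
  qed
  have shift: "(\<forall>m\<in>{1..q}. P m) \<longleftrightarrow> (\<forall>k<q. P (Suc k))" for P
    unfolding image_Suc_lessThan[symmetric] by auto
  have "pi_bar n q i j w \<in> vecs (n * (q + 1))"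
    by (simp add: pi_bar_eq_select_coords select_coords_in_vecs)
  with w last step show ?thesis
    unfolding Qn_def Qtn_def Let_def shift mem_Collect_eq by simp
qed

theorem claim3:
  fixes n q :: nat and i j :: "nat \<Rightarrow> nat"
  assumes "\<forall>l<q. i l < j l \<and> j l < n"
    and "sorting_network n q i j"
  shows "\<exists>\<pi>t \<pi>b. affine_map (n * (q + 1)) (n + 2 * q) \<pi>t
                \<and> affine_map (n + 2 * q) (n * (q + 1)) \<pi>b
                \<and> \<pi>b ` Qtn n q i j = Qn n q i j
                \<and> \<pi>t ` Qn n q i j = Qtn n q i j"
proof -
  have ij: "\<forall>k<q. i k \<noteq> j k \<and> i k < n \<and> j k < n"
    using assms(1) by (metis less_trans order_less_irrefl)
  have pi_tilde_Qn: "pi_tilde n q i j x \<in> Qtn n q i j \<and> pi_bar n q i j (pi_tilde n q i j x) = x"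
    if "x \<in> Qn n q i j" for x
  proof -
    have "pi_bar n q i j (pi_tilde n q i j x) = x"
      using that by (intro pi_bar_pi_tilde) (auto simp: Qn_def Let_def)
    with that show ?thesis
      using pi_bar_in_Qn_iff[OF pi_tilde_in_vecs[of n q i j x] ij] by simp
  qed
  have pi_bar_Qtn: "pi_bar n q i j w \<in> Qn n q i j \<and> pi_tilde n q i j (pi_bar n q i j w) = w"
    if "w \<in> Qtn n q i j" for w
    using that pi_bar_in_Qn_iff[OF _ ij] pi_tilde_pi_bar[OF _ ij] by (simp add: Qtn_def)
  have "pi_bar n q i j ` Qtn n q i j = Qn n q i j" "pi_tilde n q i j ` Qn n q i j = Qtn n q i j"
    using pi_tilde_Qn pi_bar_Qtn by (metis bij_betw_byWitness bij_betw_imp_surj_on image_subsetI)+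
  moreover have "affine_map (n * (q + 1)) (n + 2 * q) (pi_tilde n q i j)"
    using ij by (intro affine_map_pi_tilde) simp
  ultimately show ?thesis
    using affine_map_pi_bar by blast
qed

end
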